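(* Let $\widehat{G}$ be a signed bigraph whose underlying bigraph is non-separable. Then $\widehat{G}$ is chordal if and only if it does not contain any signed graph in $F_1\cup F_2\cup\cdots\cup F_6$ as an induced subgraph, where: $F_1$: $K_{2,2}$ with all four edges negative; $F_2$: complete bigraph with parts $\{a_1,a_2\}$, $\{b_1,b_2,b_3\}$, $a_1b_1,a_1b_2,a_2b_2,a_2b_3$ negative, $a_1b_3,a_2b_1$ free; $F_3$: complete bigraph with parts $\{a_1,a_2\}$, $\{b_1,\dots,b_4\}$, $a_1b_1,a_1b_2,a_2b_3,a_2b_4$ negative, the other four edges free; $F_4$: complete bigraph with parts $\{a_1,a_2,a_3\}$, $\{b_1,b_2,b_3\}$, $a_1b_1,a_2b_2,a_3b_3$ negative, the other six edges free; $F_5$: bigraph with parts $\{a_1,a_2,a_3\}$, $\{b_1,b_2,b_3\}$ having all nine possible edges except $a_1b_3$, with $a_2b_1,a_3b_2$ negative and the other six edges free; $F_6$: bigraph with parts $\{a_1,\dots,a_4\}$, $\{b_1,\dots,b_4\}$ in which $a_1,a_2$ are adjacent exactly to $b_1,b_2$ and $a_3,a_4$ are adjacent to all of $b_1,\dots,b_4$, with $a_1b_1,a_2b_1,a_3b_2,a_4b_3,a_4b_4$ negative and the other seven edges free.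
   Context: A signed graph is a finite simple graph each of whose edges is assigned a sign, positive or negative. A signed bigraph is a signed graph whose underlying graph is bipartite, with bipartition $(X,Y)$. A bigraph is separable if it contains an induced $2K_2$, non-separable otherwise. An induced subgraph is obtained by deleting vertices only (signs are inherited); $\widehat G$ contains $H$ as an induced subgraph if some induced subgraph of $\widehat G$ is isomorphic to $H$ via a sign-preserving isomorphism. A signed graph is positive if all its edges are positive. In a bigraph with bipartition $(X,Y)$, a subgraph $H$ is a biclique if every vertex of $V(H)\cap X$ is adjacent to every vertex of $V(H)\cap Y$. For an edge $uv$, $N(uv)=(N(u)\cup N(v))\setminus\{u,v\}$. An edge $uv$ of a signed bigraph is signed simplicial if $N(uv)$ induces a positive biclique. A signed bigraph $\widehat G$ is chordal if its edges can be ordered $e_1,\dots,e_m$ so that each $e_i$ is signed simplicial in the signed bigraph $\widehat G-\{e_1,\dots,e_{i-1}\}$ obtained by deleting these edges (but no vertices). A family described by a graph with some edges declared negative, some positive, and the rest declared free, is the set of all signed graphs obtained by giving each free edge an arbitrary sign. *)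

theory Defs
  imports Main
begin

text \<open>A signed graph on vertex set V: edges are 2-element sets of vertices,
  N is the set of negative edges (the other edges are positive).\<close>

definition signed_graph :: "'v set \<Rightarrow> 'v set set \<Rightarrow> 'v set set \<Rightarrow> bool" where
  "signed_graph V E N \<longleftrightarrow> finite V \<and>
     E \<subseteq> {{u, v} | u v. u \<in> V \<and> v \<in> V \<and> u \<noteq> v} \<and> N \<subseteq> E"

definition signed_bigraph :: "'v set \<Rightarrow> 'v set \<Rightarrow> 'v set set \<Rightarrow> 'v set set \<Rightarrow> bool" where
  "signed_bigraph X Y E N \<longleftrightarrow> signed_graph (X \<union> Y) E N \<and> X \<inter> Y = {} \<and>
     (\<forall>e\<in>E. \<exists>x\<in>X. \<exists>y\<in>Y. e = {x, y})"

definition separable :: "'v set set \<Rightarrow> bool" where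
  "separable E \<longleftrightarrow> (\<exists>a b c d. distinct [a, b, c, d] \<and> {a, b} \<in> E \<and> {c, d} \<in> E \<and>
     {a, c} \<notin> E \<and> {a, d} \<notin> E \<and> {b, c} \<notin> E \<and> {b, d} \<notin> E)"

definition nbr :: "'v set set \<Rightarrow> 'v \<Rightarrow> 'v set" where
  "nbr E u = {w. {u, w} \<in> E}"

definition edge_nbhd :: "'v set set \<Rightarrow> 'v set \<Rightarrow> 'v set" where
  "edge_nbhd E e = (\<Union>u\<in>e. nbr E u) - e"

definition positive_biclique :: "'v set \<Rightarrow> 'v set \<Rightarrow> 'v set set \<Rightarrow> 'v set set \<Rightarrow> 'v set \<Rightarrow> bool" where
  "positive_biclique X Y E N S \<longleftrightarrow>
     (\<forall>x\<in>S \<inter> X. \<forall>y\<in>S \<inter> Y. {x, y} \<in> E) \<and> (\<forall>e\<in>E. e \<subseteq> S \<longrightarrow> e \<notin> N)"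

definition signed_simplicial :: "'v set \<Rightarrow> 'v set \<Rightarrow> 'v set set \<Rightarrow> 'v set set \<Rightarrow> 'v set \<Rightarrow> bool" where
  "signed_simplicial X Y E N e \<longleftrightarrow> positive_biclique X Y E N (edge_nbhd E e)"

text \<open>Chordal: an ordering e_1..e_m of all edges with e_i signed simplicial in
  G - {e_1..e_(i-1)} (edges deleted, vertices kept, signs inherited).\<close>
definition chordal :: "'v set \<Rightarrow> 'v set \<Rightarrow> 'v set set \<Rightarrow> 'v set set \<Rightarrow> bool" where
  "chordal X Y E N \<longleftrightarrow> (\<exists>es. distinct es \<and> set es = E \<and>
     (\<forall>i < length es. signed_simplicial X Y (E - set (take i es)) (N - set (take i es)) (es ! i)))"

definition contains_induced ::
  "'v set \<Rightarrow> 'v set set \<Rightarrow> 'v set set \<Rightarrow> ('w set \<times> 'w set set \<times> 'w set set) \<Rightarrow> bool" where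
  "contains_induced V E N H \<longleftrightarrow> (case H of (VH, EH, NH) \<Rightarrow>
     (\<exists>f. inj_on f VH \<and> f ` VH \<subseteq> V \<and>
        (\<forall>u\<in>VH. \<forall>v\<in>VH. ({f u, f v} \<in> E \<longleftrightarrow> {u, v} \<in> EH) \<and>
                        ({f u, f v} \<in> N \<longleftrightarrow> {u, v} \<in> NH))))"

datatype fv = A nat | B nat

definition ed :: "nat \<Rightarrow> nat \<Rightarrow> fv set" where
  "ed i j = {A i, B j}"

text \<open>Family: graph (V, Eall), edges in Neg negative, the remaining edges free.\<close>
definition family :: "fv set \<Rightarrow> fv set set \<Rightarrow> fv set set \<Rightarrow> (fv set \<times> fv set set \<times> fv set set) set" where
  "family V Eall Neg = {(V, Eall, Neg \<union> S) | S. S \<subseteq> Eall - Neg}"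

definition complete_edges :: "nat set \<Rightarrow> nat set \<Rightarrow> fv set set" where
  "complete_edges I J = {ed i j | i j. i \<in> I \<and> j \<in> J}"

definition verts :: "nat set \<Rightarrow> nat set \<Rightarrow> fv set" where
  "verts I J = A ` I \<union> B ` J"

definition F1 where
  "F1 = family (verts {1,2} {1,2}) (complete_edges {1,2} {1,2}) (complete_edges {1,2} {1,2})"

definition F2 where
  "F2 = family (verts {1,2} {1,2,3}) (complete_edges {1,2} {1,2,3})
     {ed 1 1, ed 1 2, ed 2 2, ed 2 3}"

definition F3 where
  "F3 = family (verts {1,2} {1,2,3,4}) (complete_edges {1,2} {1,2,3,4})
     {ed 1 1, ed 1 2, ed 2 3, ed 2 4}"

definition F4 where
  "F4 = family (verts {1,2,3} {1,2,3}) (complete_edges {1,2,3} {1,2,3})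
     {ed 1 1, ed 2 2, ed 3 3}"

definition F5 where
  "F5 = family (verts {1,2,3} {1,2,3}) (complete_edges {1,2,3} {1,2,3} - {ed 1 3})
     {ed 2 1, ed 3 2}"

definition F6 where
  "F6 = family (verts {1,2,3,4} {1,2,3,4})
     (complete_edges {1,2} {1,2} \<union> complete_edges {3,4} {1,2,3,4})
     {ed 1 1, ed 2 1, ed 3 2, ed 4 3, ed 4 4}"

end

(*
  Necessity. Every forbidden pattern is obstructing: each pair u0, v0 of its vertices extends
  to a path u - u0 - v0 - v of the pattern whose end pair uv is a non-edge or a negative edge.
  In a chordal edge ordering, the first edge inside a copy of such a pattern is removed while
  all other edges of the copy are still present, so the simplicial condition fails at it.

  Sufficiency. A nonseparable bigraph is a difference graph: the vertices of both sides get
  levels such that xy is an edge iff level x <= level y. An edge is signed simplicial iff both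
  ends lie on one level i and every negative edge spanning level i meets one of them. Sweeping
  the levels upwards while maintaining an invariant on the negative edges that cross between
  consecutive levels, the absence of F1-F6 guarantees that such a level is reached. Deleting a
  signed simplicial edge preserves nonseparability and creates no copy of an obstructing pattern,
  so induction on the number of edges yields a chordal ordering.
*)
theory Submission
  imports Defs
begin

lemma signed_bigraph_edgeE:
  assumes "signed_bigraph X Y E N" "e \<in> E"
  obtains x y where "x \<in> X" "y \<in> Y" "e = {x, y}"
  using assms unfolding signed_bigraph_def by blast

lemma signed_bigraph_disjoint: "signed_bigraph X Y E N \<Longrightarrow> X \<inter> Y = {}"
  unfolding signed_bigraph_def by blast

lemma signed_bigraph_neg_subset: "signed_bigraph X Y E N \<Longrightarrow> N \<subseteq> E"
  unfolding signed_bigraph_def signed_graph_def by blast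

lemma signed_bigraph_finite: "signed_bigraph X Y E N \<Longrightarrow> finite (X \<union> Y)"
  unfolding signed_bigraph_def signed_graph_def by blast

lemma signed_bigraph_Diff: "signed_bigraph X Y E N \<Longrightarrow> signed_bigraph X Y (E - D) (N - D)"
  unfolding signed_bigraph_def signed_graph_def by blast

lemma signed_bigraph_swap: "signed_bigraph X Y E N \<Longrightarrow> signed_bigraph Y X E N"
  unfolding signed_bigraph_def by (auto simp: Un_commute) (metis insert_commute)

lemma signed_bigraph_edge_sides:
  assumes "signed_bigraph X Y E N" "{u, w} \<in> E"
  shows "u \<in> X \<and> w \<in> Y \<or> u \<in> Y \<and> w \<in> X"
  using assms by (elim signed_bigraph_edgeE) (auto simp: doubleton_eq_iff)

lemma signed_bigraph_no_edge_within:
  assumes "signed_bigraph X Y E N"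
  shows "x \<in> X \<Longrightarrow> x' \<in> X \<Longrightarrow> {x, x'} \<notin> E" "y \<in> Y \<Longrightarrow> y' \<in> Y \<Longrightarrow> {y, y'} \<notin> E"
  using signed_bigraph_edge_sides[OF assms] signed_bigraph_disjoint[OF assms] by blast+

lemma signed_bigraph_no_loop: "signed_bigraph X Y E N \<Longrightarrow> {x} \<notin> E"
  using signed_bigraph_edge_sides[of X Y E N x x] signed_bigraph_disjoint by fastforce

lemma signed_bigraph_finite_edges:
  assumes "signed_bigraph X Y E N"
  shows "finite E"
proof -
  have "E \<subseteq> Pow (X \<union> Y)"
    using signed_bigraph_edgeE[OF assms] by blast
  then show ?thesis
    using signed_bigraph_finite[OF assms] by (meson finite_Pow_iff finite_subset)
qed

lemma signed_simplicial_link: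
  assumes G: "signed_bigraph X Y E N" and pq: "{p, q} \<in> E"
    and simplicial: "signed_simplicial X Y E N {p, q}"
    and p': "{p, p'} \<in> E" "p' \<noteq> q" and q': "{q, q'} \<in> E" "q' \<noteq> p"
  shows "{p', q'} \<in> E - N"
proof -
  have "p' \<noteq> p" "q' \<noteq> q"
    using p'(1) q'(1) signed_bigraph_no_loop[OF G] by force+
  then have in_nbhd: "{p', q'} \<subseteq> edge_nbhd E {p, q}"
    using p' q' unfolding edge_nbhd_def nbr_def by auto
  have sides: "p' \<in> X \<and> q' \<in> Y \<or> p' \<in> Y \<and> q' \<in> X"
    using signed_bigraph_edge_sides[OF G pq] signed_bigraph_edge_sides[OF G p'(1)]
      signed_bigraph_edge_sides[OF G q'(1)] signed_bigraph_disjoint[OF G] by blast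
  have "{x, y} \<in> E" if "x \<in> edge_nbhd E {p, q} \<inter> X" "y \<in> edge_nbhd E {p, q} \<inter> Y" for x y
    using simplicial that unfolding signed_simplicial_def positive_biclique_def by blast
  then have "{p', q'} \<in> E \<or> {q', p'} \<in> E"
    using in_nbhd sides by blast
  then have "{p', q'} \<in> E"
    by (auto simp: insert_commute)
  with simplicial in_nbhd show ?thesis
    unfolding signed_simplicial_def positive_biclique_def by blast
qed

section \<open>Chordal bigraphs contain no obstructing pattern\<close>

text \<open>A pair \<open>u\<^sub>0, v\<^sub>0\<close> of a pattern is obstructed if it extends to a path
  \<open>u - u\<^sub>0 - v\<^sub>0 - v\<close> of the pattern with \<open>uv\<close> a non-edge or a negative edge: in a host
  graph, the image of \<open>u\<^sub>0v\<^sub>0\<close> is then not signed simplicial while the copy of the pattern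
  keeps its edges.\<close>

definition obstructed :: "'w set \<Rightarrow> 'w set set \<Rightarrow> 'w set set \<Rightarrow> 'w \<Rightarrow> 'w \<Rightarrow> bool" where
  "obstructed VH EH Neg u0 v0 \<longleftrightarrow> (\<exists>u\<in>VH. \<exists>v\<in>VH.
     {u0, u} \<in> EH \<and> u \<noteq> v0 \<and> {v0, v} \<in> EH \<and> v \<noteq> u0 \<and> ({u, v} \<notin> EH \<or> {u, v} \<in> Neg))"

definition obstructing :: "'w set \<Rightarrow> 'w set set \<Rightarrow> 'w set set \<Rightarrow> bool" where
  "obstructing VH EH Neg \<longleftrightarrow> (\<exists>u0\<in>VH. \<exists>v0\<in>VH. u0 \<noteq> v0) \<and>
     (\<forall>u0\<in>VH. \<forall>v0\<in>VH. u0 \<noteq> v0 \<longrightarrow> obstructed VH EH Neg u0 v0)"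

lemma forbidden_obstructing:
  assumes "H \<in> F1 \<union> F2 \<union> F3 \<union> F4 \<union> F5 \<union> F6"
  obtains VH EH Neg S where "H = (VH, EH, Neg \<union> S)" "obstructing VH EH Neg"
proof -
  have "obstructing (verts {1,2} {1,2}) (complete_edges {1,2} {1,2}) (complete_edges {1,2} {1,2})"
    and "obstructing (verts {1,2} {1,2,3}) (complete_edges {1,2} {1,2,3})
      {ed 1 1, ed 1 2, ed 2 2, ed 2 3}"
    and "obstructing (verts {1,2} {1,2,3,4}) (complete_edges {1,2} {1,2,3,4})
      {ed 1 1, ed 1 2, ed 2 3, ed 2 4}"
    and "obstructing (verts {1,2,3} {1,2,3}) (complete_edges {1,2,3} {1,2,3})
      {ed 1 1, ed 2 2, ed 3 3}"
    and "obstructing (verts {1,2,3} {1,2,3}) (complete_edges {1,2,3} {1,2,3} - {ed 1 3})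
      {ed 2 1, ed 3 2}"
    and "obstructing (verts {1,2,3,4} {1,2,3,4})
      (complete_edges {1,2} {1,2} \<union> complete_edges {3,4} {1,2,3,4})
      {ed 1 1, ed 2 1, ed 3 2, ed 4 3, ed 4 4}"
    unfolding obstructing_def obstructed_def verts_def complete_edges_def ed_def
    by (simp add: doubleton_eq_iff, blast)+
  then show thesis
    using assms that unfolding F1_def F2_def F3_def F4_def F5_def F6_def family_def by blast
qed

lemma simplicial_edge_not_obstructed:
  assumes G: "signed_bigraph X Y E N" and inj: "inj_on f VH" and u0: "u0 \<in> VH" and v0: "v0 \<in> VH"
    and e: "{f u0, f v0} \<in> E" and simplicial: "signed_simplicial X Y E N {f u0, f v0}"
    and adj: "\<And>u v. u \<in> VH \<Longrightarrow> v \<in> VH \<Longrightarrow> {u, v} \<noteq> {u0, v0} \<Longrightarrow> {f u, f v} \<in> E \<longleftrightarrow> {u, v} \<in> EH"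
    and neg: "\<And>u v. u \<in> VH \<Longrightarrow> v \<in> VH \<Longrightarrow> {u, v} \<in> Neg \<Longrightarrow> {f u, f v} \<in> N"
  shows "\<not> obstructed VH EH Neg u0 v0"
proof
  assume "obstructed VH EH Neg u0 v0"
  then obtain u v where uv: "u \<in> VH" "v \<in> VH" "{u0, u} \<in> EH" "u \<noteq> v0" "{v0, v} \<in> EH" "v \<noteq> u0"
    and bad: "{u, v} \<notin> EH \<or> {u, v} \<in> Neg"
    unfolding obstructed_def by blast
  have "u0 \<noteq> v0"
    using e signed_bigraph_no_loop[OF G] by force
  then have "{f u0, f u} \<in> E" "{f v0, f v} \<in> E"
    using adj[of u0 u] adj[of v0 v] u0 v0 uv by (auto simp: doubleton_eq_iff)
  moreover have "f u \<noteq> f v0" "f v \<noteq> f u0"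
    using inj u0 v0 uv by (auto dest: inj_onD)
  ultimately have "{f u, f v} \<in> E - N"
    using signed_simplicial_link[OF G e simplicial] by blast
  moreover have "u \<noteq> u0"
    using \<open>{f u0, f u} \<in> E\<close> signed_bigraph_no_loop[OF G] by force
  then have "{u, v} \<noteq> {u0, v0}"
    using uv by (auto simp: doubleton_eq_iff)
  ultimately show False
    using adj[of u v] neg[of u v] uv bad by auto
qed

lemma chordal_first_edge_within:
  assumes "chordal X Y E N" "\<exists>e\<in>E. e \<subseteq> W"
  obtains D e where "\<forall>d\<in>D. \<not> d \<subseteq> W" "e \<in> E - D" "e \<subseteq> W"
    "signed_simplicial X Y (E - D) (N - D) e"
proof -
  obtain es where es: "distinct es" "set es = E"
    and simplicial: "\<forall>i < length es.
      signed_simplicial X Y (E - set (take i es)) (N - set (take i es)) (es ! i)"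
    using assms(1) unfolding chordal_def by blast
  have "\<exists>i. i < length es \<and> es ! i \<subseteq> W"
    using assms(2) es(2) by (metis in_set_conv_nth)
  define i where "i = (LEAST i. i < length es \<and> es ! i \<subseteq> W)"
  have i: "i < length es" "es ! i \<subseteq> W"
    using LeastI_ex[OF \<open>\<exists>i. i < length es \<and> es ! i \<subseteq> W\<close>] unfolding i_def by blast+
  have "\<not> d \<subseteq> W" if d: "d \<in> set (take i es)" for d
  proof -
    obtain j where "j < length (take i es)" "take i es ! j = d"
      using d[unfolded in_set_conv_nth] by blast
    then have "j < i" "d = es ! j"
      by auto
    then show ?thesis
      using not_less_Least[of j "\<lambda>i. i < length es \<and> es ! i \<subseteq> W"] i(1) unfolding i_def by auto
  qed
  moreover have "es ! i \<notin> set (take i es)"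
  proof -
    have "es ! i \<in> set (drop i es)"
      using Cons_nth_drop_Suc[OF i(1)] by (metis list.set_intros(1))
    then show ?thesis
      using set_take_disj_set_drop_if_distinct[OF es(1) order_refl, of i] by blast
  qed
  ultimately show thesis
    using that[of "set (take i es)" "es ! i"] i es(2) simplicial by auto
qed

lemma chordal_not_contains_obstructing:
  assumes G: "signed_bigraph X Y E N" and chordal: "chordal X Y E N"
    and contains: "contains_induced (X \<union> Y) E N (VH, EH, NH)"
    and obstructing: "obstructing VH EH Neg" and "Neg \<subseteq> NH"
  shows False
proof -
  obtain f where inj: "inj_on f VH"
    and adj: "\<forall>u\<in>VH. \<forall>v\<in>VH. ({f u, f v} \<in> E \<longleftrightarrow> {u, v} \<in> EH) \<and> ({f u, f v} \<in> N \<longleftrightarrow> {u, v} \<in> NH)"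
    using contains by (auto simp: contains_induced_def)
  obtain u0 v0 where "u0 \<in> VH" "v0 \<in> VH" "obstructed VH EH Neg u0 v0"
    using obstructing unfolding obstructing_def by blast
  then obtain u where "u \<in> VH" "{u0, u} \<in> EH"
    unfolding obstructed_def by blast
  then have "{f u0, f u} \<in> E" "{f u0, f u} \<subseteq> f ` VH"
    using adj \<open>u0 \<in> VH\<close> by auto
  then have "\<exists>e\<in>E. e \<subseteq> f ` VH"
    by blast
  then obtain D e where D: "\<forall>d\<in>D. \<not> d \<subseteq> f ` VH" and e: "e \<in> E - D" "e \<subseteq> f ` VH"
    and simplicial: "signed_simplicial X Y (E - D) (N - D) e"
    by (rule chordal_first_edge_within[OF chordal])
  obtain x y where "x \<in> X" "y \<in> Y" "e = {x, y}"
    using signed_bigraph_edgeE[OF G] e(1) by blast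
  then obtain u0 v0 where uv0: "u0 \<in> VH" "v0 \<in> VH" "e = {f u0, f v0}"
    using e(2) by auto
  then have "u0 \<noteq> v0"
    using e(1) signed_bigraph_no_loop[OF G] by force
  have inside: "{f u, f v} \<notin> D" if "u \<in> VH" "v \<in> VH" for u v
    using D that by auto
  have "\<not> obstructed VH EH Neg u0 v0"
  proof (rule simplicial_edge_not_obstructed[OF signed_bigraph_Diff[OF G] inj uv0(1,2)])
    show "{f u0, f v0} \<in> E - D" "signed_simplicial X Y (E - D) (N - D) {f u0, f v0}"
      using e(1) simplicial uv0(3) by simp_all
    fix u v assume "u \<in> VH" "v \<in> VH"
    then show "{f u, f v} \<in> E - D \<longleftrightarrow> {u, v} \<in> EH"
      and "{u, v} \<in> Neg \<Longrightarrow> {f u, f v} \<in> N - D"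
      using adj inside \<open>Neg \<subseteq> NH\<close> by blast+
  qed
  then show False
    using obstructing uv0 \<open>u0 \<noteq> v0\<close> unfolding obstructing_def by blast
qed

definition forbidden_free :: "'v set \<Rightarrow> 'v set set \<Rightarrow> 'v set set \<Rightarrow> bool" where
  "forbidden_free V E N \<longleftrightarrow> (\<forall>H \<in> F1 \<union> F2 \<union> F3 \<union> F4 \<union> F5 \<union> F6. \<not> contains_induced V E N H)"

lemma chordal_forbidden_free:
  assumes "signed_bigraph X Y E N" "chordal X Y E N"
  shows "forbidden_free (X \<union> Y) E N"
  unfolding forbidden_free_def
proof (intro ballI notI)
  fix H assume "H \<in> F1 \<union> F2 \<union> F3 \<union> F4 \<union> F5 \<union> F6" "contains_induced (X \<union> Y) E N H"
  then show False
    by (elim forbidden_obstructing) (use chordal_not_contains_obstructing[OF assms] in blast)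
qed

section \<open>Deleting a signed simplicial edge\<close>

lemma contains_induced_Diff_simplicial:
  assumes G: "signed_bigraph X Y E N" and e: "e \<in> E" "signed_simplicial X Y E N e"
    and contains: "contains_induced V (E - {e}) (N - {e}) (VH, EH, NH)"
    and obstructing: "obstructing VH EH Neg" and "Neg \<subseteq> NH"
  shows "contains_induced V E N (VH, EH, NH)"
proof -
  obtain f where inj: "inj_on f VH" and into: "f ` VH \<subseteq> V"
    and adj: "\<And>u v. u \<in> VH \<Longrightarrow> v \<in> VH \<Longrightarrow> {f u, f v} \<in> E - {e} \<longleftrightarrow> {u, v} \<in> EH"
    and neg: "\<And>u v. u \<in> VH \<Longrightarrow> v \<in> VH \<Longrightarrow> {f u, f v} \<in> N - {e} \<longleftrightarrow> {u, v} \<in> NH"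
    using contains unfolding contains_induced_def by auto
  have outside: "\<not> e \<subseteq> f ` VH"
  proof
    assume "e \<subseteq> f ` VH"
    moreover obtain x y where "x \<in> X" "y \<in> Y" "e = {x, y}"
      using signed_bigraph_edgeE[OF G e(1)] by blast
    ultimately obtain u0 v0 where uv0: "u0 \<in> VH" "v0 \<in> VH" "e = {f u0, f v0}"
      by auto
    then have "u0 \<noteq> v0"
      using e(1) signed_bigraph_no_loop[OF G] by force
    have "\<not> obstructed VH EH Neg u0 v0"
    proof (rule simplicial_edge_not_obstructed[OF G inj uv0(1,2)])
      show "{f u0, f v0} \<in> E" "signed_simplicial X Y E N {f u0, f v0}"
        using e uv0(3) by simp_all
      fix u v assume uv: "u \<in> VH" "v \<in> VH"
      show "{f u, f v} \<in> E \<longleftrightarrow> {u, v} \<in> EH" if "{u, v} \<noteq> {u0, v0}"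
      proof -
        have "{f u, f v} \<noteq> e"
          using that uv uv0 inj by (auto simp: doubleton_eq_iff dest: inj_onD)
        then show ?thesis
          using adj[OF uv] by blast
      qed
      show "{u, v} \<in> Neg \<Longrightarrow> {f u, f v} \<in> N"
        using neg[OF uv] \<open>Neg \<subseteq> NH\<close> by blast
    qed
    then show False
      using obstructing uv0 \<open>u0 \<noteq> v0\<close> unfolding obstructing_def by blast
  qed
  have "{f u, f v} \<noteq> e" if "u \<in> VH" "v \<in> VH" for u v
    using outside that by auto
  then show ?thesis
    unfolding contains_induced_def using inj into adj neg by auto
qed

lemma forbidden_free_Diff_simplicial:
  assumes G: "signed_bigraph X Y E N" and e: "e \<in> E" "signed_simplicial X Y E N e"
    and free: "forbidden_free (X \<union> Y) E N"
  shows "forbidden_free (X \<union> Y) (E - {e}) (N - {e})"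
  unfolding forbidden_free_def
proof (intro ballI notI)
  fix H assume H: "H \<in> F1 \<union> F2 \<union> F3 \<union> F4 \<union> F5 \<union> F6"
    and contains: "contains_induced (X \<union> Y) (E - {e}) (N - {e}) H"
  obtain VH EH Neg S where "H = (VH, EH, Neg \<union> S)" "obstructing VH EH Neg"
    using forbidden_obstructing[OF H] .
  then have "contains_induced (X \<union> Y) E N H"
    using contains_induced_Diff_simplicial[OF G e] contains by blast
  then show False
    using free H unfolding forbidden_free_def by blast
qed

lemma nonseparable_Diff_simplicial:
  assumes G: "signed_bigraph X Y E N" and e: "e \<in> E" "signed_simplicial X Y E N e"
    and nonseparable: "\<not> separable E"
  shows "\<not> separable (E - {e})"
proof
  assume "separable (E - {e})"
  then obtain a b c d where distinct: "distinct [a, b, c, d]"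
    and edges: "{a, b} \<in> E - {e}" "{c, d} \<in> E - {e}"
    and non_edges: "{a, c} \<notin> E - {e}" "{a, d} \<notin> E - {e}" "{b, c} \<notin> E - {e}" "{b, d} \<notin> E - {e}"
    unfolding separable_def by blast
  have link: "{p', q'} \<in> E"
    if "e = {p, q}" "{p, p'} \<in> E" "p' \<noteq> q" "{q, q'} \<in> E" "q' \<noteq> p" for p q p' q'
    using signed_simplicial_link[OF G, of p q p' q'] e that by blast
  have "e = {a, c} \<or> e = {a, d} \<or> e = {b, c} \<or> e = {b, d}"
  proof (rule ccontr)
    assume "\<not> ?thesis"
    then have cross: "{a, c} \<notin> E" "{a, d} \<notin> E" "{b, c} \<notin> E" "{b, d} \<notin> E"
      using non_edges by auto
    have "separable E"
      unfolding separable_def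
      by (rule exI[of _ a], rule exI[of _ b], rule exI[of _ c], rule exI[of _ d])
        (use distinct edges cross in auto)
    with nonseparable show False ..
  qed
  moreover have ab: "{a, b} \<in> E" "{b, a} \<in> E" and cd: "{c, d} \<in> E" "{d, c} \<in> E"
    using edges by (auto simp: insert_commute)
  moreover have "{b, d} \<noteq> {a, c}" "{b, c} \<noteq> {a, d}"
    using distinct by (auto simp: doubleton_eq_iff)
  ultimately show False
  proof (elim disjE)
    assume ac: "e = {a, c}"
    have "{b, d} \<in> E"
      by (rule link[OF ac]) (use ab cd distinct in auto)
    with non_edges(4) ac \<open>{b, d} \<noteq> {a, c}\<close> show False by blast
  next
    assume ad: "e = {a, d}"
    have "{b, c} \<in> E"
      by (rule link[OF ad]) (use ab cd distinct in auto)
    with non_edges(3) ad \<open>{b, c} \<noteq> {a, d}\<close> show False by blast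
  next
    assume bc: "e = {b, c}"
    have "{a, d} \<in> E"
      by (rule link[OF bc]) (use ab cd distinct in auto)
    with non_edges(2) bc \<open>{b, c} \<noteq> {a, d}\<close> show False by blast
  next
    assume bd: "e = {b, d}"
    have "{a, c} \<in> E"
      by (rule link[OF bd]) (use ab cd distinct in auto)
    with non_edges(1) bd \<open>{b, d} \<noteq> {a, c}\<close> show False by blast
  qed
qed

lemma chordal_insert_simplicial:
  assumes "e \<in> E" "signed_simplicial X Y E N e" "chordal X Y (E - {e}) (N - {e})"
  shows "chordal X Y E N"
proof -
  obtain es where es: "distinct es" "set es = E - {e}"
    and simplicial: "\<forall>i < length es.
      signed_simplicial X Y (E - {e} - set (take i es)) (N - {e} - set (take i es)) (es ! i)"
    using assms(3) unfolding chordal_def by blast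
  have "signed_simplicial X Y (E - set (take i (e # es))) (N - set (take i (e # es)))
      ((e # es) ! i)"
    if "i < length (e # es)" for i
  proof (cases i)
    case 0
    then show ?thesis
      using assms(2) by simp
  next
    case (Suc j)
    then show ?thesis
      using simplicial that by (simp add: Diff_insert2 [symmetric])
  qed
  then show ?thesis
    unfolding chordal_def using es assms(1) by (intro exI[of _ "e # es"]) auto
qed

section \<open>Configurations excluded by the forbidden families\<close>

lemma contains_family_member:
  fixes f :: "fv \<Rightarrow> 'v"
  assumes "inj_on f VH" "f ` VH \<subseteq> V" "N \<subseteq> E"
    and adj: "\<And>u v. u \<in> VH \<Longrightarrow> v \<in> VH \<Longrightarrow> {f u, f v} \<in> E \<longleftrightarrow> {u, v} \<in> Eall"
    and neg: "\<And>u v. u \<in> VH \<Longrightarrow> v \<in> VH \<Longrightarrow> {u, v} \<in> Neg \<Longrightarrow> {f u, f v} \<in> N"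
  shows "\<exists>H\<in>family VH Eall Neg. contains_induced V E N H"
proof -
  define S where "S = {e \<in> Eall - Neg. \<exists>u\<in>VH. \<exists>v\<in>VH. e = {u, v} \<and> {f u, f v} \<in> N}"
  have "{f u, f v} \<in> N \<longleftrightarrow> {u, v} \<in> Neg \<union> S" if "u \<in> VH" "v \<in> VH" for u v
  proof
    assume "{f u, f v} \<in> N"
    then show "{u, v} \<in> Neg \<union> S"
      using that adj \<open>N \<subseteq> E\<close> unfolding S_def by blast
  next
    assume "{u, v} \<in> Neg \<union> S"
    then show "{f u, f v} \<in> N"
      using that neg unfolding S_def by (auto simp: doubleton_eq_iff insert_commute)
  qed
  then have "contains_induced V E N (VH, Eall, Neg \<union> S)"
    using assms unfolding contains_induced_def by auto
  moreover have "(VH, Eall, Neg \<union> S) \<in> family VH Eall Neg"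
    unfolding family_def S_def by blast
  ultimately show ?thesis by blast
qed

lemma contains_family_member_by_lists:
  assumes G: "signed_bigraph X Y E N"
    and dist: "distinct (as @ bs)" and sides: "set as \<subseteq> X" "set bs \<subseteq> Y"
    and I: "I \<subseteq> {1..length as}" and J: "J \<subseteq> {1..length bs}"
    and pattern: "Neg \<subseteq> Eall" "Eall \<subseteq> complete_edges I J"
    and adj: "\<forall>i\<in>I. \<forall>j\<in>J. {as ! (i - 1), bs ! (j - 1)} \<in> E \<longleftrightarrow> ed i j \<in> Eall"
    and neg: "\<forall>i\<in>I. \<forall>j\<in>J. ed i j \<in> Neg \<longrightarrow> {as ! (i - 1), bs ! (j - 1)} \<in> N"
  shows "\<exists>H\<in>family (verts I J) Eall Neg. contains_induced (X \<union> Y) E N H"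
proof -
  define f where "f u = (case u of A i \<Rightarrow> as ! (i - 1) | B j \<Rightarrow> bs ! (j - 1))" for u
  have fA: "i \<in> I \<Longrightarrow> f (A i) \<in> X" and fB: "j \<in> J \<Longrightarrow> f (B j) \<in> Y" for i j
    using I J sides by (force simp: f_def)+
  have index_inj: "k = l"
    if "xs ! (k - 1) = xs ! (l - 1)" "distinct xs" "k \<in> {1..length xs}" "l \<in> {1..length xs}"
    for xs :: "'v list" and k l
  proof -
    have "k - 1 = l - 1"
      using that nth_eq_iff_index_eq[of xs "k - 1" "l - 1"] by auto
    then show ?thesis using that by auto
  qed
  have "inj_on f (verts I J)"
  proof (rule inj_onI)
    fix u v assume u: "u \<in> verts I J" and v: "v \<in> verts I J" and fuv: "f u = f v"
    show "u = v"
    proof (cases u; cases v)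
      fix i i' assume "u = A i" "v = A i'"
      then show "u = v"
        using u v fuv I dist index_inj[of as i i'] by (auto simp: verts_def f_def subset_iff)
    next
      fix j j' assume "u = B j" "v = B j'"
      then show "u = v"
        using u v fuv J dist index_inj[of bs j j'] by (auto simp: verts_def f_def subset_iff)
    next
      fix i j assume "u = A i" "v = B j"
      then show "u = v"
        using u v fuv fA fB signed_bigraph_disjoint[OF G] unfolding verts_def
        by (auto, metis disjoint_iff)
    next
      fix j i assume "u = B j" "v = A i"
      then show "u = v"
        using u v fuv fA fB signed_bigraph_disjoint[OF G] unfolding verts_def
        by (auto, metis disjoint_iff)
    qed
  qed
  have pair_cases: "(\<exists>i\<in>I. \<exists>j\<in>J. {u, v} = ed i j \<and> {f u, f v} = {as ! (i - 1), bs ! (j - 1)})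
      \<or> {f u, f v} \<notin> E \<and> {u, v} \<notin> complete_edges I J"
    if "u \<in> verts I J" "v \<in> verts I J" for u v
    using that fA fB signed_bigraph_no_edge_within[OF G]
    by (auto simp: verts_def f_def ed_def complete_edges_def doubleton_eq_iff insert_commute)
  show ?thesis
  proof (rule contains_family_member[OF \<open>inj_on f (verts I J)\<close>])
    show "f ` verts I J \<subseteq> X \<union> Y"
      using fA fB unfolding verts_def by auto
    show "N \<subseteq> E"
      by (rule signed_bigraph_neg_subset[OF G])
    fix u v assume "u \<in> verts I J" "v \<in> verts I J"
    then show "{f u, f v} \<in> E \<longleftrightarrow> {u, v} \<in> Eall"
      using pair_cases[of u v] adj pattern by auto
    show "{u, v} \<in> Neg \<Longrightarrow> {f u, f v} \<in> N"
      using pair_cases[of u v] \<open>u \<in> verts I J\<close> \<open>v \<in> verts I J\<close> neg pattern by auto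
  qed
qed

locale forbidden_free_bigraph =
  fixes X Y :: "'v set" and E N :: "'v set set"
  assumes bigraph: "signed_bigraph X Y E N" and free: "forbidden_free (X \<union> Y) E N"
begin

lemma swap: "forbidden_free_bigraph Y X E N"
  using signed_bigraph_swap[OF bigraph] free by unfold_locales (auto simp: Un_commute)

lemma not_contains_forbidden:
  assumes "H \<in> F1 \<union> F2 \<union> F3 \<union> F4 \<union> F5 \<union> F6" "contains_induced (X \<union> Y) E N H"
  shows False
  using assms free unfolding forbidden_free_def by blast

lemma distinct_sides: "x \<in> X \<Longrightarrow> y \<in> Y \<Longrightarrow> x \<noteq> y"
  using signed_bigraph_disjoint[OF bigraph] by blast

lemma F1_excluded:
  assumes "a1 \<noteq> a2" "b1 \<noteq> b2" "{a1, a2} \<subseteq> X" "{b1, b2} \<subseteq> Y"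
    and "\<forall>a\<in>{a1, a2}. \<forall>b\<in>{b1, b2}. {a, b} \<in> N"
  shows False
proof -
  have "\<exists>H\<in>F1. contains_induced (X \<union> Y) E N H"
    unfolding F1_def
    by (rule contains_family_member_by_lists[OF bigraph, of "[a1, a2]" "[b1, b2]"])
      (use assms distinct_sides signed_bigraph_neg_subset[OF bigraph] in
        \<open>auto simp: complete_edges_def ed_def doubleton_eq_iff\<close>)
  then show False
    using not_contains_forbidden by blast
qed

lemma F2_excluded:
  assumes "a1 \<noteq> a2" "distinct [b1, b2, b3]" "{a1, a2} \<subseteq> X" "{b1, b2, b3} \<subseteq> Y"
    and "{a1, b1} \<in> N" "{a1, b2} \<in> N" "{a2, b2} \<in> N" "{a2, b3} \<in> N"
    and "{a1, b3} \<in> E" "{a2, b1} \<in> E"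
  shows False
proof -
  have "\<exists>H\<in>F2. contains_induced (X \<union> Y) E N H"
    unfolding F2_def
    by (rule contains_family_member_by_lists[OF bigraph, of "[a1, a2]" "[b1, b2, b3]"])
      (use assms distinct_sides signed_bigraph_neg_subset[OF bigraph] in
        \<open>auto simp: complete_edges_def ed_def doubleton_eq_iff\<close>)
  then show False
    using not_contains_forbidden by blast
qed

lemma F3_excluded:
  assumes "a1 \<noteq> a2" "distinct [b1, b2, b3, b4]" "{a1, a2} \<subseteq> X" "{b1, b2, b3, b4} \<subseteq> Y"
    and "{a1, b1} \<in> N" "{a1, b2} \<in> N" "{a2, b3} \<in> N" "{a2, b4} \<in> N"
    and "{a1, b3} \<in> E" "{a1, b4} \<in> E" "{a2, b1} \<in> E" "{a2, b2} \<in> E"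
  shows False
proof -
  have "\<exists>H\<in>F3. contains_induced (X \<union> Y) E N H"
    unfolding F3_def
    by (rule contains_family_member_by_lists[OF bigraph, of "[a1, a2]" "[b1, b2, b3, b4]"])
      (use assms distinct_sides signed_bigraph_neg_subset[OF bigraph] in
        \<open>auto simp: complete_edges_def ed_def doubleton_eq_iff\<close>)
  then show False
    using not_contains_forbidden by blast
qed

lemma F4_excluded:
  assumes "distinct [a1, a2, a3]" "distinct [b1, b2, b3]" "{a1, a2, a3} \<subseteq> X" "{b1, b2, b3} \<subseteq> Y"
    and "\<forall>a\<in>{a1, a2, a3}. \<forall>b\<in>{b1, b2, b3}. {a, b} \<in> E"
    and "{a1, b1} \<in> N" "{a2, b2} \<in> N" "{a3, b3} \<in> N"
  shows False
proof -
  have "\<exists>H\<in>F4. contains_induced (X \<union> Y) E N H"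
    unfolding F4_def
    by (rule contains_family_member_by_lists[OF bigraph, of "[a1, a2, a3]" "[b1, b2, b3]"])
      (use assms distinct_sides signed_bigraph_neg_subset[OF bigraph] in
        \<open>auto simp: complete_edges_def ed_def doubleton_eq_iff\<close>)
  then show False
    using not_contains_forbidden by blast
qed

lemma F5_excluded:
  assumes "distinct [a1, a2, a3]" "distinct [b1, b2, b3]" "{a1, a2, a3} \<subseteq> X" "{b1, b2, b3} \<subseteq> Y"
    and "\<forall>a\<in>{a2, a3}. \<forall>b\<in>{b1, b2, b3}. {a, b} \<in> E" "{a1, b1} \<in> E" "{a1, b2} \<in> E"
    and "{a1, b3} \<notin> E"
    and "{a2, b1} \<in> N" "{a3, b2} \<in> N"
  shows False
proof -
  have "\<exists>H\<in>F5. contains_induced (X \<union> Y) E N H"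
    unfolding F5_def
    by (rule contains_family_member_by_lists[OF bigraph, of "[a1, a2, a3]" "[b1, b2, b3]"])
      (use assms distinct_sides signed_bigraph_neg_subset[OF bigraph] in
        \<open>auto simp: complete_edges_def ed_def doubleton_eq_iff\<close>)
  then show False
    using not_contains_forbidden by blast
qed

lemma F6_excluded:
  assumes "distinct [a1, a2, a3, a4]" "distinct [b1, b2, b3, b4]"
    and "{a1, a2, a3, a4} \<subseteq> X" "{b1, b2, b3, b4} \<subseteq> Y"
    and "\<forall>a\<in>{a1, a2}. \<forall>b\<in>{b1, b2}. {a, b} \<in> E" "\<forall>a\<in>{a1, a2}. \<forall>b\<in>{b3, b4}. {a, b} \<notin> E"
    and "\<forall>a\<in>{a3, a4}. \<forall>b\<in>{b1, b2, b3, b4}. {a, b} \<in> E"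
    and "{a1, b1} \<in> N" "{a2, b1} \<in> N" "{a3, b2} \<in> N" "{a4, b3} \<in> N" "{a4, b4} \<in> N"
  shows False
proof -
  have "\<exists>H\<in>F6. contains_induced (X \<union> Y) E N H"
    unfolding F6_def
    by (rule contains_family_member_by_lists[OF bigraph, of "[a1, a2, a3, a4]" "[b1, b2, b3, b4]"])
      (use assms distinct_sides signed_bigraph_neg_subset[OF bigraph] in
        \<open>auto simp: complete_edges_def ed_def doubleton_eq_iff\<close>)
  then show False
    using not_contains_forbidden by blast
qed

lemma negative_cherries_excluded:
  assumes "r1 \<noteq> r2" "c1 \<noteq> c1'" "c2 \<noteq> c2'" "{r1, r2} \<subseteq> X" "{c1, c1', c2, c2'} \<subseteq> Y"
    and "{r1, c1} \<in> N" "{r1, c1'} \<in> N" "{r2, c2} \<in> N" "{r2, c2'} \<in> N"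
    and "\<forall>r\<in>{r1, r2}. \<forall>c\<in>{c1, c1', c2, c2'}. {r, c} \<in> E"
  shows False
proof -
  have one_shared: False
    if "c \<noteq> d" "c \<noteq> d'" "{c, d, d'} \<subseteq> Y"
      and "{r1, c} \<in> N" "{r1, d} \<in> N" "{r2, c} \<in> N" "{r2, d'} \<in> N" "{r1, d'} \<in> E" "{r2, d} \<in> E"
    for c d d'
  proof (cases "d = d'")
    case True
    then show False
      using F1_excluded[of r1 r2 c d] assms that by auto
  next
    case False
    then show False
      using F2_excluded[of r1 r2 d c d'] assms that by auto
  qed
  show False
  proof (cases "c1 = c2 \<or> c1 = c2' \<or> c1' = c2 \<or> c1' = c2'")
    case True
    then show False
      using one_shared[of c1 c1' c2'] one_shared[of c1 c1' c2] one_shared[of c1' c1 c2']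
        one_shared[of c1' c1 c2] assms by (auto simp: insert_commute)
  next
    case False
    then show False
      using F3_excluded[of r1 r2 c1 c1' c2 c2'] assms by auto
  qed
qed

lemma negative_biclique_cover:
  assumes P: "\<And>a b. P a b \<Longrightarrow> a \<in> X \<and> b \<in> Y \<and> {a, b} \<in> N"
    and biclique: "\<And>a b a' b'. P a b \<Longrightarrow> P a' b' \<Longrightarrow> {a, b'} \<in> E"
  shows "\<exists>x y. \<forall>a b. P a b \<longrightarrow> a = x \<or> b = y"
proof (rule ccontr)
  assume "\<not> ?thesis"
  then have avoid: "\<exists>a b. P a b \<and> a \<noteq> x \<and> b \<noteq> y" for x y
    by blast
  have no_matching: False
    if "P a1 b1" "P a2 b2" "P a3 b3" "distinct [a1, a2, a3]" "distinct [b1, b2, b3]"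
    for a1 b1 a2 b2 a3 b3
    using F4_excluded[of a1 a2 a3 b1 b2 b3] that P biclique by auto
  obtain r1 c1 where 1: "P r1 c1"
    using avoid by blast
  obtain r2 c2 where 2: "P r2 c2" "r2 \<noteq> r1" "c2 \<noteq> c1"
    using avoid by blast
  obtain r3 c3 where 3: "P r3 c3" "r3 \<noteq> r1" "c3 \<noteq> c2"
    using avoid by blast
  obtain r4 c4 where 4: "P r4 c4" "r4 \<noteq> r2" "c4 \<noteq> c1"
    using avoid by blast
  have "r3 = r2 \<or> c3 = c1"
    using no_matching[of r1 c1 r2 c2 r3 c3] 1 2 3 by auto
  moreover have "r4 = r1 \<or> c4 = c2"
    using no_matching[of r1 c1 r2 c2 r4 c4] 1 2 4 by auto
  moreover have "\<not> (r3 = r2 \<and> r4 = r1)"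
    using negative_cherries_excluded[of r1 r2 c1 c4 c2 c3] 1 2 3 4 P biclique by auto
  moreover have "\<not> (c3 = c1 \<and> c4 = c2)"
  proof
    assume cols: "c3 = c1 \<and> c4 = c2"
    interpret swapped: forbidden_free_bigraph Y X E N
      by (rule swap)
    have "{c, r} \<in> N" and "P r' c' \<Longrightarrow> {c', r} \<in> E" if "P r c" for r c r' c'
      using P[OF that] biclique[OF that] by (auto simp: insert_commute)
    then show False
      using swapped.negative_cherries_excluded[of c1 c2 r1 r3 r2 r4] cols 1 2 3 4 P by auto
  qed
  ultimately show False
    using no_matching[of r1 c1 r2 c3 r4 c2] no_matching[of r3 c1 r1 c4 r2 c2] 1 2 3 4 by auto
qed

end

section \<open>Levels of a nonseparable bigraph\<close>

locale nonseparable_bigraph =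
  fixes X Y :: "'v set" and E N :: "'v set set"
  assumes bigraph: "signed_bigraph X Y E N" and nonseparable: "\<not> separable E"
begin

lemma nbr_subset: "x \<in> X \<Longrightarrow> nbr E x \<subseteq> Y"
  using signed_bigraph_edge_sides[OF bigraph] signed_bigraph_disjoint[OF bigraph]
  unfolding nbr_def by blast

lemma nbr_chain:
  assumes x: "x \<in> X" and x': "x' \<in> X"
  shows "nbr E x \<subseteq> nbr E x' \<or> nbr E x' \<subseteq> nbr E x"
proof (rule ccontr)
  assume "\<not> ?thesis"
  then obtain y y' where y: "y \<in> nbr E x" "y \<notin> nbr E x'" and y': "y' \<in> nbr E x'" "y' \<notin> nbr E x"
    by blast
  have "y \<in> Y" "y' \<in> Y"
    using y y' nbr_subset x x' by blast+
  then have "distinct [x, y, x', y']"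
    using x x' y y' signed_bigraph_disjoint[OF bigraph] by auto
  moreover have "{x, x'} \<notin> E" "{y, y'} \<notin> E"
    using signed_bigraph_no_edge_within[OF bigraph] x x' \<open>y \<in> Y\<close> \<open>y' \<in> Y\<close> by auto
  moreover have "{y, x'} \<notin> E"
    using y(2) unfolding nbr_def by (simp add: insert_commute)
  ultimately have "separable E"
    using y y' unfolding separable_def nbr_def by blast
  with nonseparable show False ..
qed

definition nbhds :: "'v set set" where
  "nbhds = {nbr E x | x. x \<in> X \<and> nbr E x \<noteq> {}}"

definition num_levels :: nat where
  "num_levels = card nbhds"

text \<open>The neighbourhoods of the vertices of \<open>X\<close> form a chain \<open>S\<^sub>1 \<supset> \<dots> \<supset> S\<^sub>k\<close>.
  A vertex \<open>x \<in> X\<close> has level \<open>i\<close> if its neighbourhood is \<open>S\<^sub>i\<close> (level \<open>k + 1\<close> if it is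
  isolated), a vertex \<open>y \<in> Y\<close> has level \<open>max {i. y \<in> S\<^sub>i}\<close> (\<open>0\<close> if none), so that \<open>x\<close> and \<open>y\<close>
  are adjacent iff the level of \<open>x\<close> is at most that of \<open>y\<close>.\<close>

definition xlevel :: "'v \<Rightarrow> nat" where
  "xlevel x = (if nbr E x = {} then Suc num_levels else card {S \<in> nbhds. nbr E x \<subseteq> S})"

definition ylevel :: "'v \<Rightarrow> nat" where
  "ylevel y = card {S \<in> nbhds. y \<in> S}"

lemma finite_nbhds: "finite nbhds"
proof -
  have "nbhds \<subseteq> Pow Y"
    unfolding nbhds_def using nbr_subset by blast
  then show ?thesis
    using signed_bigraph_finite[OF bigraph] by (meson finite_Pow_iff finite_Un finite_subset)
qed

lemma nbhds_chain: "S \<in> nbhds \<Longrightarrow> T \<in> nbhds \<Longrightarrow> S \<subseteq> T \<or> T \<subseteq> S"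
  unfolding nbhds_def using nbr_chain by blast

lemma ylevel_le: "ylevel y \<le> num_levels"
  unfolding ylevel_def num_levels_def by (rule card_mono[OF finite_nbhds]) blast

lemma xlevel_pos: "x \<in> X \<Longrightarrow> 0 < xlevel x"
  unfolding xlevel_def nbhds_def using finite_nbhds by (auto simp: card_gt_0_iff nbhds_def)

lemma edge_iff_level:
  assumes x: "x \<in> X" and y: "y \<in> Y"
  shows "{x, y} \<in> E \<longleftrightarrow> xlevel x \<le> ylevel y"
proof (cases "nbr E x = {}")
  case True
  then show ?thesis
    using ylevel_le[of y] unfolding xlevel_def nbr_def by auto
next
  case False
  then have Sx: "nbr E x \<in> nbhds"
    unfolding nbhds_def using x by blast
  show ?thesis
  proof
    assume "{x, y} \<in> E"
    then have "{S \<in> nbhds. nbr E x \<subseteq> S} \<subseteq> {S \<in> nbhds. y \<in> S}"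
      unfolding nbr_def by blast
    then show "xlevel x \<le> ylevel y"
      unfolding xlevel_def ylevel_def using False finite_nbhds by (simp add: card_mono)
  next
    assume le: "xlevel x \<le> ylevel y"
    show "{x, y} \<in> E"
    proof (rule ccontr)
      assume "{x, y} \<notin> E"
      then have "{S \<in> nbhds. y \<in> S} \<subseteq> {S \<in> nbhds. nbr E x \<subseteq> S} - {nbr E x}"
        using nbhds_chain[OF Sx] unfolding nbr_def by blast
      then have "ylevel y \<le> card ({S \<in> nbhds. nbr E x \<subseteq> S} - {nbr E x})"
        unfolding ylevel_def using finite_nbhds by (simp add: card_mono)
      also have "\<dots> = card {S \<in> nbhds. nbr E x \<subseteq> S} - 1"
        using Sx finite_nbhds by (simp add: card_Diff_singleton)
      finally have "ylevel y \<le> card {S \<in> nbhds. nbr E x \<subseteq> S} - 1" .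
      moreover have "0 < card {S \<in> nbhds. nbr E x \<subseteq> S}"
        using Sx finite_nbhds by (auto simp: card_gt_0_iff)
      ultimately show False
        using le False unfolding xlevel_def by simp
    qed
  qed
qed

lemma xlevel_surj:
  assumes "0 < i" "i \<le> num_levels"
  obtains x where "x \<in> X" "nbr E x \<noteq> {}" "xlevel x = i"
proof -
  define rank where "rank S = card {T \<in> nbhds. S \<subseteq> T}" for S
  have rank_less: "rank T < rank S" if "S \<in> nbhds" "T \<in> nbhds" "S \<subset> T" for S T
    unfolding rank_def using that finite_nbhds by (intro psubset_card_mono) auto
  have "inj_on rank nbhds"
  proof (rule inj_onI, rule ccontr)
    fix S T assume "S \<in> nbhds" "T \<in> nbhds" "rank S = rank T" "S \<noteq> T"
    then show False
      using nbhds_chain[of S T] rank_less[of S T] rank_less[of T S] by auto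
  qed
  moreover have "rank ` nbhds \<subseteq> {1..num_levels}"
    unfolding rank_def num_levels_def using finite_nbhds
    by (auto simp: Suc_le_eq card_gt_0_iff intro: card_mono)
  ultimately have "rank ` nbhds = {1..num_levels}"
    by (simp add: card_image card_subset_eq num_levels_def)
  then have "i \<in> rank ` nbhds"
    using assms by simp
  then obtain S where "S \<in> nbhds" "rank S = i"
    by blast
  then show thesis
    using that unfolding nbhds_def xlevel_def rank_def by auto
qed

lemma ylevel_surj:
  assumes "0 < i" "i \<le> num_levels"
  obtains y where "y \<in> Y" "ylevel y = i"
proof -
  obtain x where x: "x \<in> X" "nbr E x \<noteq> {}" "xlevel x = i"
    using xlevel_surj[OF assms] .
  define S where "S = nbr E x"
  define L where "L = {T \<in> nbhds. T \<subset> S}"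
  have S: "S \<in> nbhds"
    unfolding S_def nbhds_def using x by blast
  have "\<Union>L \<subset> S"
  proof (cases "L = {}")
    case True
    then show ?thesis
      using x(2) unfolding S_def by auto
  next
    case False
    have "\<Union>L \<in> L"
      by (rule Union_in_chain[of L nbhds])
        (use False finite_nbhds nbhds_chain in \<open>auto simp: L_def subset_chain_def\<close>)
    then show ?thesis
      unfolding L_def by blast
  qed
  then obtain y where y: "y \<in> S" "y \<notin> \<Union>L"
    by blast
  have "{T \<in> nbhds. y \<in> T} = {T \<in> nbhds. S \<subseteq> T}"
    using y nbhds_chain[OF S] unfolding L_def by blast
  then have "ylevel y = i"
    using x unfolding ylevel_def xlevel_def S_def by simp
  moreover have "y \<in> Y"
    using y x nbr_subset unfolding S_def by blast
  ultimately show thesis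
    using that by blast
qed

lemma num_levels_pos:
  assumes "E \<noteq> {}"
  shows "0 < num_levels"
proof -
  obtain e where "e \<in> E"
    using assms by blast
  then obtain x y where "x \<in> X" "{x, y} \<in> E"
    using signed_bigraph_edgeE[OF bigraph] by metis
  then have "nbr E x \<in> nbhds"
    unfolding nbhds_def nbr_def by blast
  then show ?thesis
    unfolding num_levels_def using finite_nbhds by (auto simp: card_gt_0_iff)
qed

lemma edge_nbhd_levels:
  assumes x: "x \<in> X" and y: "y \<in> Y"
  shows "a \<in> edge_nbhd E {x, y} \<inter> X \<longleftrightarrow> a \<in> X \<and> a \<noteq> x \<and> xlevel a \<le> ylevel y"
    and "b \<in> edge_nbhd E {x, y} \<inter> Y \<longleftrightarrow> b \<in> Y \<and> b \<noteq> y \<and> xlevel x \<le> ylevel b"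
proof -
  have "a \<in> edge_nbhd E {x, y} \<inter> X \<longleftrightarrow> a \<in> X \<and> a \<noteq> x \<and> {a, y} \<in> E"
    using x y signed_bigraph_disjoint[OF bigraph]
      signed_bigraph_no_edge_within(1)[OF bigraph x, of a]
    unfolding edge_nbhd_def nbr_def by (auto simp: insert_commute)
  then show "a \<in> edge_nbhd E {x, y} \<inter> X \<longleftrightarrow> a \<in> X \<and> a \<noteq> x \<and> xlevel a \<le> ylevel y"
    using edge_iff_level[OF _ y, of a] by blast
  have "b \<in> edge_nbhd E {x, y} \<inter> Y \<longleftrightarrow> b \<in> Y \<and> b \<noteq> y \<and> {x, b} \<in> E"
    using x y signed_bigraph_disjoint[OF bigraph]
      signed_bigraph_no_edge_within(2)[OF bigraph y, of b]
    unfolding edge_nbhd_def nbr_def by (auto simp: insert_commute)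
  then show "b \<in> edge_nbhd E {x, y} \<inter> Y \<longleftrightarrow> b \<in> Y \<and> b \<noteq> y \<and> xlevel x \<le> ylevel b"
    using edge_iff_level[OF x, of b] by blast
qed

end

section \<open>A signed simplicial edge in a forbidden-free nonseparable bigraph\<close>

locale forbidden_free_nonseparable_bigraph =
  forbidden_free_bigraph X Y E N + nonseparable_bigraph X Y E N
  for X Y :: "'v set" and E N :: "'v set set"
begin

definition neg_edge :: "'v \<Rightarrow> 'v \<Rightarrow> bool" where
  "neg_edge x y \<longleftrightarrow> x \<in> X \<and> y \<in> Y \<and> {x, y} \<in> N"

definition crossing :: "nat \<Rightarrow> 'v \<Rightarrow> 'v \<Rightarrow> bool" where
  "crossing t x y \<longleftrightarrow> neg_edge x y \<and> xlevel x \<le> t \<and> t < ylevel y"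

definition level_covered :: "nat \<Rightarrow> bool" where
  "level_covered i \<longleftrightarrow> (\<exists>x\<in>X. \<exists>y\<in>Y. xlevel x = i \<and> ylevel y = i \<and>
     (\<forall>a b. neg_edge a b \<longrightarrow> xlevel a \<le> i \<longrightarrow> i \<le> ylevel b \<longrightarrow> a = x \<or> b = y))"

lemma neg_edgeD:
  assumes "neg_edge a b"
  shows "a \<in> X" "b \<in> Y" "{a, b} \<in> N" "{a, b} \<in> E" "xlevel a \<le> ylevel b"
  using assms signed_bigraph_neg_subset[OF bigraph] edge_iff_level
  unfolding neg_edge_def by auto

lemma crossingD:
  assumes "crossing t a b"
  shows "neg_edge a b" "a \<in> X" "b \<in> Y" "{a, b} \<in> N" "xlevel a \<le> t" "t < ylevel b"
  using assms neg_edgeD unfolding crossing_def by auto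

lemma level_edge: "a \<in> X \<Longrightarrow> b \<in> Y \<Longrightarrow> xlevel a \<le> ylevel b \<Longrightarrow> {a, b} \<in> E"
  using edge_iff_level by blast

lemma level_non_edge: "a \<in> X \<Longrightarrow> b \<in> Y \<Longrightarrow> ylevel b < xlevel a \<Longrightarrow> {a, b} \<notin> E"
  using edge_iff_level by fastforce

lemma level_covered_simplicial:
  assumes "level_covered i"
  shows "\<exists>e\<in>E. signed_simplicial X Y E N e"
proof -
  obtain x y where x: "x \<in> X" "xlevel x = i" and y: "y \<in> Y" "ylevel y = i"
    and cover: "\<And>a b. neg_edge a b \<Longrightarrow> xlevel a \<le> i \<Longrightarrow> i \<le> ylevel b \<Longrightarrow> a = x \<or> b = y"
    using assms unfolding level_covered_def by blast
  note nbhd = edge_nbhd_levels[OF x(1) y(1)]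
  have "positive_biclique X Y E N (edge_nbhd E {x, y})"
    unfolding positive_biclique_def
  proof (intro conjI ballI impI)
    fix a b assume "a \<in> edge_nbhd E {x, y} \<inter> X" "b \<in> edge_nbhd E {x, y} \<inter> Y"
    then show "{a, b} \<in> E"
      unfolding nbhd using x y by (intro level_edge) auto
  next
    fix e assume e: "e \<in> E" "e \<subseteq> edge_nbhd E {x, y}"
    obtain a b where ab: "a \<in> X" "b \<in> Y" "e = {a, b}"
      using signed_bigraph_edgeE[OF bigraph e(1)] by metis
    then have "a \<in> edge_nbhd E {x, y} \<inter> X" "b \<in> edge_nbhd E {x, y} \<inter> Y"
      using e(2) by auto
    then have "a \<noteq> x" "b \<noteq> y" "xlevel a \<le> i" "i \<le> ylevel b"
      unfolding nbhd using x y by auto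
    then show "e \<notin> N"
      using cover[of a b] ab unfolding neg_edge_def by auto
  qed
  moreover have "{x, y} \<in> E"
    using x y by (intro level_edge) auto
  ultimately show ?thesis
    unfolding signed_simplicial_def by blast
qed

lemma crossings_share_vertex:
  assumes c1: "crossing t a1 b1" and c2: "crossing t a2 b2"
  shows "a1 = a2 \<or> b1 = b2"
proof (rule ccontr)
  assume distinct: "\<not> ?thesis"
  note D = crossingD[OF c1] crossingD[OF c2]
  have "0 < t"
    using D xlevel_pos[of a1] by linarith
  moreover have "Suc t \<le> num_levels"
    using D ylevel_le[of b1] by linarith
  ultimately obtain z w where z: "z \<in> X" "xlevel z = Suc t" and w: "w \<in> Y" "ylevel w = t"
    using xlevel_surj[of "Suc t"] ylevel_surj[of t] by (metis Suc_leD zero_less_Suc)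
  have "{z, w} \<notin> E"
    using z w by (intro level_non_edge) auto
  show False
  proof (rule F5_excluded[of z a1 a2 b1 b2 w])
    show "distinct [z, a1, a2]" "distinct [b1, b2, w]"
      using z w D distinct by auto
  qed (use z w D \<open>{z, w} \<notin> E\<close> in \<open>auto intro!: level_edge\<close>)
qed

text \<open>The invariant of the upward sweep at level \<open>t\<close>: all crossings at \<open>t\<close>, i.e. negative
  edges spanning the levels \<open>t\<close> and \<open>t + 1\<close>, share their end \<open>y\<close>, which lies on level
  \<open>t + 1\<close>; and if \<open>xy\<close> is the only crossing, some \<open>p \<noteq> x\<close> on a level between those of \<open>x\<close>
  and \<open>t\<close> has two negative edges to its own level. With a negative cherry on level
  \<open>t + 1\<close> this completes a copy of \<open>F6\<close>.\<close>

definition sweep_invariant :: "nat \<Rightarrow> bool" where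
  "sweep_invariant t \<longleftrightarrow>
     (\<exists>y. \<forall>a b. crossing t a b \<longrightarrow> b = y \<and> ylevel y = Suc t) \<and>
     (\<forall>x y. (\<forall>a b. crossing t a b \<longleftrightarrow> a = x \<and> b = y) \<longrightarrow>
        (\<exists>p q q'. neg_edge p q \<and> neg_edge p q' \<and> q \<noteq> q' \<and> p \<noteq> x \<and>
           xlevel x \<le> xlevel p \<and> xlevel p \<le> t \<and> ylevel q = xlevel p \<and> ylevel q' = xlevel p))"

lemma sweep_invariant_0: "sweep_invariant 0"
proof -
  have "\<not> crossing 0 a b" for a b
    using crossingD[of 0 a b] xlevel_pos[of a] by linarith
  then show ?thesis
    unfolding sweep_invariant_def by blast
qed

lemma crossing_below_column:
  assumes "sweep_invariant s" "crossing s a b" "crossing s a' b'"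
  shows "b' = b" "ylevel b = Suc s"
  using assms unfolding sweep_invariant_def by metis+

lemma crossing_above_xlevel:
  assumes inv: "sweep_invariant s" and above: "crossing (Suc s) a b"
  shows "xlevel a = Suc s"
proof (rule ccontr)
  assume "xlevel a \<noteq> Suc s"
  then have "crossing s a b"
    using above unfolding crossing_def by auto
  then show False
    using crossing_below_column[OF inv, of a b a b] above unfolding crossing_def by auto
qed

lemma spanning_neg_edge_cases:
  assumes "neg_edge a b" "xlevel a \<le> Suc s" "Suc s \<le> ylevel b"
  shows "crossing s a b \<or> crossing (Suc s) a b \<or> xlevel a = Suc s \<and> ylevel b = Suc s"
  using assms unfolding crossing_def by auto

lemma uncovered_level_avoids:
  assumes "\<not> level_covered i" "x \<in> X" "y \<in> Y" "xlevel x = i" "ylevel y = i"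
  obtains a b where "neg_edge a b" "xlevel a \<le> i" "i \<le> ylevel b" "a \<noteq> x" "b \<noteq> y"
  using assms unfolding level_covered_def by blast

lemma sweep_invariant_shared_column:
  assumes r: "crossing u r c" and r': "crossing u r' c" and "r \<noteq> r'"
  shows "sweep_invariant (ylevel c - 1)"
proof -
  define t where "t = ylevel c - 1"
  have c: "ylevel c = Suc t"
    using crossingD(6)[OF r] unfolding t_def by simp
  have "crossing t r c" "crossing t r' c"
    using r r' c unfolding crossing_def by auto
  then have "b = c" if "crossing t a b" for a b
    using crossings_share_vertex[OF that] \<open>r \<noteq> r'\<close> by metis
  then show ?thesis
    using c \<open>crossing t r c\<close> \<open>crossing t r' c\<close> \<open>r \<noteq> r'\<close>
    unfolding sweep_invariant_def t_def[symmetric] by metis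
qed

lemma covered_crossings_both_sides:
  assumes inv: "sweep_invariant s" and below: "crossing s r y0"
    and above: "crossing (Suc s) x0 c" and one_row: "\<And>a b. crossing (Suc s) a b \<Longrightarrow> a = x0"
  shows "level_covered (Suc s)"
  unfolding level_covered_def
proof (intro bexI conjI allI impI)
  note D = crossingD[OF below] crossingD[OF above]
  show y0: "ylevel y0 = Suc s" and x0: "xlevel x0 = Suc s"
    using crossing_below_column[OF inv below below] crossing_above_xlevel[OF inv above] by auto
  fix a b assume ab: "neg_edge a b" "xlevel a \<le> Suc s" "Suc s \<le> ylevel b"
  show "a = x0 \<or> b = y0"
  proof (rule ccontr)
    assume "\<not> (a = x0 \<or> b = y0)"
    moreover have "\<not> crossing s a b" "\<not> crossing (Suc s) a b"
      using crossing_below_column[OF inv below] one_row calculation by blast+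
    ultimately show False
      using spanning_neg_edge_cases[OF ab] F4_excluded[of r x0 a y0 c b] D x0 y0 neg_edgeD[OF ab(1)]
      by (force intro: level_edge)
  qed
qed (use crossingD[OF below] crossingD[OF above] in auto)

lemma uncovered_column_cherry:
  assumes uncovered: "\<not> level_covered i" and i: "0 < i" "i \<le> num_levels"
    and ry0: "neg_edge r y0" "xlevel r < i" "ylevel y0 = i"
    and on_level: "\<And>a b. neg_edge a b \<Longrightarrow> xlevel a \<le> i \<Longrightarrow> i \<le> ylevel b \<Longrightarrow> b \<noteq> y0 \<Longrightarrow>
      xlevel a = i \<and> ylevel b = i"
  obtains p1 p2 q where "neg_edge p1 q" "neg_edge p2 q" "p1 \<noteq> p2" "q \<noteq> y0"
    "xlevel p1 = i" "xlevel p2 = i" "ylevel q = i"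
proof -
  note D = neg_edgeD[OF ry0(1)]
  obtain x1 where x1: "x1 \<in> X" "xlevel x1 = i"
    using xlevel_surj i by metis
  obtain p1 q where p1: "neg_edge p1 q" "xlevel p1 = i" "ylevel q = i" "q \<noteq> y0"
    using uncovered_level_avoids[OF uncovered x1(1) D(2) x1(2) ry0(3)] on_level by metis
  obtain p2 q' where p2: "neg_edge p2 q'" "xlevel p2 = i" "ylevel q' = i" "q' \<noteq> y0" "p2 \<noteq> p1"
    using uncovered_level_avoids[OF uncovered neg_edgeD(1)[OF p1(1)] D(2) p1(2) ry0(3)] on_level
    by metis
  have "q' = q"
  proof (rule ccontr)
    assume "q' \<noteq> q"
    then show False
      using F4_excluded[of r p1 p2 y0 q q'] D neg_edgeD[OF p1(1)] neg_edgeD[OF p2(1)] p1 p2 ry0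
      by (force intro: level_edge)
  qed
  then show thesis
    using that[of p1 q p2] p1 p2 by auto
qed

lemma uncovered_row_cherry:
  assumes uncovered: "\<not> level_covered i" and i: "0 < i" "i \<le> num_levels"
    and x0c: "neg_edge x0 c" "xlevel x0 = i" "i < ylevel c"
    and on_level: "\<And>a b. neg_edge a b \<Longrightarrow> xlevel a \<le> i \<Longrightarrow> i \<le> ylevel b \<Longrightarrow> a \<noteq> x0 \<Longrightarrow>
      xlevel a = i \<and> ylevel b = i"
  obtains p q1 q2 where "neg_edge p q1" "neg_edge p q2" "q1 \<noteq> q2" "p \<noteq> x0"
    "xlevel p = i" "ylevel q1 = i" "ylevel q2 = i"
proof -
  note D = neg_edgeD[OF x0c(1)]
  obtain y1 where y1: "y1 \<in> Y" "ylevel y1 = i"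
    using ylevel_surj i by metis
  obtain p q1 where p: "neg_edge p q1" "xlevel p = i" "ylevel q1 = i" "p \<noteq> x0"
    using uncovered_level_avoids[OF uncovered D(1) y1(1) x0c(2) y1(2)] on_level by metis
  obtain p' q2 where p': "neg_edge p' q2" "xlevel p' = i" "ylevel q2 = i" "p' \<noteq> x0" "q2 \<noteq> q1"
    using uncovered_level_avoids[OF uncovered D(1) neg_edgeD(2)[OF p(1)] x0c(2) p(3)] on_level
    by metis
  have "p' = p"
  proof (rule ccontr)
    assume "p' \<noteq> p"
    then show False
      using F4_excluded[of x0 p p' c q1 q2] D neg_edgeD[OF p(1)] neg_edgeD[OF p'(1)] p p' x0c
      by (force intro: level_edge)
  qed
  then show thesis
    using that[of p q1 q2] p p' by auto
qed

lemma crossing_below_unique: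
  assumes inv: "sweep_invariant s" and below: "crossing s r y0" and ab: "crossing s a b"
    and p: "neg_edge p1 q" "neg_edge p2 q" "p1 \<noteq> p2" "q \<noteq> y0"
      "xlevel p1 = Suc s" "xlevel p2 = Suc s" "ylevel q = Suc s"
  shows "a = r \<and> b = y0"
proof -
  interpret swapped: forbidden_free_bigraph Y X E N
    by (rule swap)
  note D = crossingD[OF below] crossingD[OF ab] neg_edgeD[OF p(1)] neg_edgeD[OF p(2)]
  have y0: "b = y0" "ylevel y0 = Suc s"
    using crossing_below_column[OF inv below ab] crossing_below_column[OF inv below below] by auto
  have "a = r"
  proof (rule ccontr)
    assume "a \<noteq> r"
    have "{u, v} \<in> E" if "u \<in> {y0, q}" "v \<in> {r, a, p1, p2}" for u v
    proof -
      have "{v, u} \<in> E"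
        using that D p y0 by (auto intro!: level_edge)
      then show ?thesis
        by (simp add: insert_commute)
    qed
    moreover have "{y0, r} \<in> N" "{y0, a} \<in> N" "{q, p1} \<in> N" "{q, p2} \<in> N"
      using D y0 by (simp_all add: insert_commute)
    ultimately show False
      using swapped.negative_cherries_excluded[of y0 q r a p1 p2] D p \<open>a \<noteq> r\<close> by auto
  qed
  with y0 show ?thesis
    by simp
qed

lemma covered_crossing_below_only:
  assumes inv: "sweep_invariant s" and s: "s < num_levels" and below: "crossing s r y0"
    and none_above: "\<And>a b. \<not> crossing (Suc s) a b"
  shows "level_covered (Suc s)"
proof (rule ccontr)
  assume uncovered: "\<not> level_covered (Suc s)"
  note D = crossingD[OF below]
  have y0: "ylevel y0 = Suc s"
    using crossing_below_column[OF inv below below] by simp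
  have on_level: "xlevel a = Suc s \<and> ylevel b = Suc s"
    if "neg_edge a b" "xlevel a \<le> Suc s" "Suc s \<le> ylevel b" "b \<noteq> y0" for a b
    using spanning_neg_edge_cases[OF that(1-3)] crossing_below_column[OF inv below]
      none_above that(4) by blast
  have "0 < Suc s" "Suc s \<le> num_levels" "xlevel r < Suc s"
    using s D(5) by auto
  then obtain p1 p2 q where p: "neg_edge p1 q" "neg_edge p2 q" "p1 \<noteq> p2" "q \<noteq> y0"
    "xlevel p1 = Suc s" "xlevel p2 = Suc s" "ylevel q = Suc s"
    using uncovered_column_cherry[OF uncovered _ _ D(1) _ y0 on_level] by blast
  then have "crossing s a b \<longleftrightarrow> a = r \<and> b = y0" for a b
    using crossing_below_unique[OF inv below] below by blast
  then obtain p' q1 q2 where cherry: "neg_edge p' q1" "neg_edge p' q2" "q1 \<noteq> q2" "p' \<noteq> r"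
      "xlevel r \<le> xlevel p'" "xlevel p' \<le> s" "ylevel q1 = xlevel p'" "ylevel q2 = xlevel p'"
    using inv unfolding sweep_invariant_def by blast
  note P = neg_edgeD[OF p(1)] neg_edgeD[OF p(2)] neg_edgeD[OF cherry(1)] neg_edgeD[OF cherry(2)]
  show False
  proof (rule F6_excluded[of p1 p2 r p' q y0 q1 q2])
    show "distinct [p1, p2, r, p']" "distinct [q, y0, q1, q2]"
      using p D cherry y0 by auto
    show "\<forall>a\<in>{p1, p2}. \<forall>b\<in>{q1, q2}. {a, b} \<notin> E"
      using level_non_edge[of p1 q1] level_non_edge[of p1 q2] level_non_edge[of p2 q1]
        level_non_edge[of p2 q2] p P cherry by auto
  qed (use p P D cherry y0 in \<open>auto intro!: level_edge\<close>)
qed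

lemma sweep_invariant_cherry:
  assumes x0c: "crossing t x0 c" and column: "\<And>a b. crossing t a b \<Longrightarrow> b = c"
    and c: "ylevel c = Suc t"
    and cherry: "neg_edge p q1" "neg_edge p q2" "q1 \<noteq> q2" "p \<noteq> x0"
      "xlevel x0 \<le> xlevel p" "xlevel p \<le> t" "ylevel q1 = xlevel p" "ylevel q2 = xlevel p"
  shows "sweep_invariant t"
  unfolding sweep_invariant_def
proof (intro conjI allI impI)
  show "\<exists>y. \<forall>a b. crossing t a b \<longrightarrow> b = y \<and> ylevel y = Suc t"
    using column c by blast
  fix x y assume "\<forall>a b. crossing t a b \<longleftrightarrow> a = x \<and> b = y"
  then have "x = x0"
    using x0c by metis
  show "\<exists>p q q'. neg_edge p q \<and> neg_edge p q' \<and> q \<noteq> q' \<and> p \<noteq> x \<and>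
    xlevel x \<le> xlevel p \<and> xlevel p \<le> t \<and> ylevel q = xlevel p \<and> ylevel q' = xlevel p"
    by (intro exI[of _ p] exI[of _ q1] exI[of _ q2]) (use \<open>x = x0\<close> cherry in auto)
qed

lemma sweep_invariant_crossing_above_only:
  assumes inv: "sweep_invariant s" and none_below: "\<And>a b. \<not> crossing s a b"
    and above: "crossing (Suc s) x0 c" and one_row: "\<And>a b. crossing (Suc s) a b \<Longrightarrow> a = x0"
    and s: "s < num_levels" and uncovered: "\<not> level_covered (Suc s)"
  shows "sweep_invariant (ylevel c - 1)"
proof -
  note D = crossingD[OF above]
  have x0: "xlevel x0 = Suc s"
    using crossing_above_xlevel[OF inv above] .
  have on_level: "xlevel a = Suc s \<and> ylevel b = Suc s"
    if "neg_edge a b" "xlevel a \<le> Suc s" "Suc s \<le> ylevel b" "a \<noteq> x0" for a b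
    using spanning_neg_edge_cases[OF that(1-3)] none_below one_row that(4) by blast
  have "0 < Suc s" "Suc s \<le> num_levels"
    using s by auto
  then obtain p q1 q2 where p: "neg_edge p q1" "neg_edge p q2" "q1 \<noteq> q2" "p \<noteq> x0"
    "xlevel p = Suc s" "ylevel q1 = Suc s" "ylevel q2 = Suc s"
    using uncovered_row_cherry[OF uncovered _ _ D(1) x0 D(6) on_level] by blast
  have unique_above: "b = c" if ab: "crossing (Suc s) x0 b" for b
  proof (rule ccontr)
    assume "b \<noteq> c"
    then show False
      using F3_excluded[of x0 p c b q1 q2] crossingD[OF ab] D neg_edgeD[OF p(1)] neg_edgeD[OF p(2)]
        p x0 by (force intro: level_edge)
  qed
  define t where "t = ylevel c - 1"
  have c: "ylevel c = Suc t" "Suc s \<le> t"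
    using D unfolding t_def by auto
  have x0c: "crossing t x0 c"
    using D x0 c unfolding crossing_def by auto
  have "b = c" if ab: "crossing t a b" for a b
  proof -
    have "crossing (Suc s) x0 b" if "a = x0"
      using ab x0 c that unfolding crossing_def by auto
    then show ?thesis
      using crossings_share_vertex[OF ab x0c] unique_above by blast
  qed
  then show ?thesis
    unfolding t_def[symmetric] using sweep_invariant_cherry[OF x0c _ c(1) p(1-4)] p x0 c by auto
qed

lemma covered_no_crossing:
  assumes s: "s < num_levels"
    and none_below: "\<And>a b. \<not> crossing s a b" and none_above: "\<And>a b. \<not> crossing (Suc s) a b"
  shows "level_covered (Suc s)"
proof -
  define P where "P a b \<longleftrightarrow> neg_edge a b \<and> xlevel a = Suc s \<and> ylevel b = Suc s" for a b
  obtain x y where cover: "\<And>a b. P a b \<Longrightarrow> a = x \<or> b = y"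
    using negative_biclique_cover[of P] unfolding P_def
    by (metis neg_edgeD(1-3) level_edge order_refl)
  obtain x1 where x1: "x1 \<in> X" "xlevel x1 = Suc s"
    using xlevel_surj[of "Suc s"] s by auto
  obtain y1 where y1: "y1 \<in> Y" "ylevel y1 = Suc s"
    using ylevel_surj[of "Suc s"] s by auto
  define x' where "x' = (if x \<in> X \<and> xlevel x = Suc s then x else x1)"
  define y' where "y' = (if y \<in> Y \<and> ylevel y = Suc s then y else y1)"
  show ?thesis
    unfolding level_covered_def
  proof (intro bexI conjI allI impI)
    fix a b assume ab: "neg_edge a b" "xlevel a \<le> Suc s" "Suc s \<le> ylevel b"
    then have "P a b"
      using spanning_neg_edge_cases[OF ab] none_below none_above unfolding P_def by blast
    then show "a = x' \<or> b = y'"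
      using cover neg_edgeD unfolding P_def x'_def y'_def by metis
  qed (use x1 y1 in \<open>auto simp: x'_def y'_def\<close>)
qed

lemma sweep_step:
  assumes inv: "sweep_invariant s" and s: "s < num_levels"
  shows "level_covered (Suc s) \<or> (\<exists>t. s < t \<and> t < num_levels \<and> sweep_invariant t)"
proof -
  have next_level: "s < ylevel c - 1 \<and> ylevel c - 1 < num_levels" if "crossing (Suc s) a c" for a c
    using crossingD[OF that] ylevel_le[of c] by auto
  show ?thesis
  proof (cases "\<exists>r r' c c'. crossing (Suc s) r c \<and> crossing (Suc s) r' c' \<and> r \<noteq> r'")
    case True
    then obtain r r' c c' where rc: "crossing (Suc s) r c" and rc': "crossing (Suc s) r' c'"
      and "r \<noteq> r'"
      by blast
    then have "crossing (Suc s) r' c"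
      using crossings_share_vertex[OF rc rc'] by metis
    then show ?thesis
      using sweep_invariant_shared_column[OF rc _ \<open>r \<noteq> r'\<close>] next_level[OF rc] by blast
  next
    case False
    then have one_row: "\<And>a b. crossing (Suc s) a b \<Longrightarrow> a = x0" if "crossing (Suc s) x0 c" for x0 c
      using that by blast
    consider (below) r y0 where "crossing s r y0"
      | (above) x0 c where "\<And>a b. \<not> crossing s a b" "crossing (Suc s) x0 c"
      | (none) "\<And>a b. \<not> crossing s a b" "\<And>a b. \<not> crossing (Suc s) a b"
      by blast
    then show ?thesis
    proof cases
      case below
      show ?thesis
      proof (cases "\<exists>x0 c. crossing (Suc s) x0 c")
        case True
        then obtain x0 c where above: "crossing (Suc s) x0 c"
          by blast
        then show ?thesis
          using covered_crossings_both_sides[OF inv below above] one_row[OF above] by blast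
      qed (use covered_crossing_below_only[OF inv s below] in blast)
    next
      case above
      then show ?thesis
        using sweep_invariant_crossing_above_only[OF inv above(1) above(2) _ s] one_row[OF above(2)]
          next_level[OF above(2)] by blast
    qed (use covered_no_crossing[OF s] in blast)
  qed
qed

lemma level_covered_exists:
  assumes "sweep_invariant s" "s < num_levels"
  shows "\<exists>i. level_covered i"
  using assms
proof (induction "num_levels - s" arbitrary: s rule: less_induct)
  case less
  then show ?case
    using sweep_step[OF less.prems] by (metis diff_less_mono2)
qed

lemma simplicial_edge_exists:
  assumes "E \<noteq> {}"
  shows "\<exists>e\<in>E. signed_simplicial X Y E N e"
  using level_covered_exists[OF sweep_invariant_0 num_levels_pos[OF assms]] level_covered_simplicial
  by blast

end

lemma forbidden_free_nonseparable_chordal: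
  assumes "signed_bigraph X Y E N" "\<not> separable E" "forbidden_free (X \<union> Y) E N"
  shows "chordal X Y E N"
  using assms
proof (induction "card E" arbitrary: E N)
  case 0
  then have "E = {}"
    using signed_bigraph_finite_edges[OF "0.prems"(1)] by simp
  then show ?case
    unfolding chordal_def by simp
next
  case (Suc n)
  interpret forbidden_free_nonseparable_bigraph X Y E N
    using Suc.prems by unfold_locales
  obtain e where e: "e \<in> E" "signed_simplicial X Y E N e"
    using simplicial_edge_exists Suc.hyps(2) by force
  have "chordal X Y (E - {e}) (N - {e})"
  proof (rule Suc.hyps(1))
    show "n = card (E - {e})"
      using Suc.hyps(2) e(1) signed_bigraph_finite_edges[OF Suc.prems(1)] by simp
  qed (use Suc.prems e signed_bigraph_Diff nonseparable_Diff_simplicial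
      forbidden_free_Diff_simplicial in blast)+
  then show ?case
    using chordal_insert_simplicial e by blast
qed

theorem theorem3p2:
  fixes X Y :: "'v set" and E N :: "'v set set"
  assumes "signed_bigraph X Y E N"
    and "\<not> separable E"
  shows "chordal X Y E N \<longleftrightarrow>
    (\<forall>H \<in> F1 \<union> F2 \<union> F3 \<union> F4 \<union> F5 \<union> F6. \<not> contains_induced (X \<union> Y) E N H)"
  using chordal_forbidden_free[OF assms(1)] forbidden_free_nonseparable_chordal[OF assms]
  unfolding forbidden_free_def by blast

end
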